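(* Let $H_\alpha=-\Delta_\alpha+V$ be the Schrödinger operator with a periodic magnetic potential $\alpha$ and a periodic electric potential $V$ on a periodic graph $\mathcal G$, with $V$ normalized so that $\min_{x\in\mathcal V_*}V_x=\varkappa_+$, and let $n\in\mathbb N$. Then the total bandwidth of $H_\alpha^n$ satisfies $$\mathfrak S(H_\alpha^n)\le n(\operatorname{diam}V+\varkappa_+)^{n-1}\mathfrak S(H_\alpha),$$ $$\mathfrak S(H_\alpha^n)\ge\big|\operatorname{Tr}H_\alpha^n(k_1)-\operatorname{Tr}H_\alpha^n(k_2)\big|\qquad\text{for all }k_1,k_2\in\mathbb T^d.$$
   Context: Let $\Gamma\subset\mathbb R^d$ be a lattice with basis $\mathfrak a_1,\dots,\mathfrak a_d$ and fundamental cell $\Omega=\{\sum_sx_s\mathfrak a_s:(x_s)\in[0,1)^d\}$. Let $\mathcal G=(\mathcal V,\mathcal E)$ be a connected, locally finite, infinite graph embedded in $\mathbb R^d$ (loops, multiple edges allowed), invariant under $\Gamma$-translations, with finite quotient $\mathcal G_*=(\mathcal V_*,\mathcal E_* )$; $\nu=\#\mathcal V_*$. Oriented edges $\mathcal A,\mathcal A_*$; $\underline{\mathbf e}$ inverse; $\varkappa_x$ = number of oriented edges starting at $x$; $\varkappa_+=\max_{\mathcal V_*}\varkappa_x$; $\operatorname{diam}V=\max_{\mathcal V_*}V-\min_{\mathcal V_*}V$. Edge index: $x=x_0+[x]$, $x_0\in\mathcal V\cap\Omega$, $[x]\in\Gamma$ with coordinates $[x]_{\mathbb A}\in\mathbb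 Z^d$; $\tau((x,y))=[y]_{\mathbb A}-[x]_{\mathbb A}$, defined on $\mathcal A_*$. Periodic magnetic potential $\alpha:\mathcal A\to\mathbb R$ ($\alpha(\underline{\mathbf e})=-\alpha(\mathbf e)$, $\Gamma$-invariant); $V$ real $\Gamma$-periodic. $H_\alpha=-\Delta_\alpha+V$, $\Delta_\alpha=\varkappa-A_\alpha$, $(A_\alpha f)_x=\sum_{\mathbf e=(x,y)\in\mathcal A}e^{i\alpha(\mathbf e)}f_y$. Fiber operators $H_\alpha(k)=A_\alpha(k)-\varkappa+V$ on $\mathbb C^\nu$, $(A_\alpha(k)f)_x=\sum_{\mathbf e=(x,y)\in\mathcal A_*}e^{i(\alpha(\mathbf e)+\langle\tau(\mathbf e),k\rangle)}f_y$, $k\in\mathbb T^d=\mathbb R^d/(2\pi\mathbb Z)^d$, eigenvalues $\lambda_{\alpha,1}(k)\le\dots\le\lambda_{\alpha,\nu}(k)$. Bands $\sigma_j(H_\alpha)=\lambda_{\alpha,j}(\mathbb T^d)$ and $\sigma_j(H_\alpha^n)=\{\lambda_{\alpha,j}(k)^n:k\in\mathbb T^d\}$ (so $|\sigma_j(H_\alpha^n)|=\max_k\lambda_{\alpha,j}^n(k)-\min_k\lambda_{\alpha,j}^n(k)$); $\mathfrak S(H_\alpha^n)=\sum_{j=1}^\nu|\sigma_j(H_\alpha^n)|$. *)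

theory Defs
  imports "Jordan_Normal_Form.Char_Poly"
begin

(* Periodic graph G encoded by its finite quotient G_* = (V_*, A_* ) with edge indices.
   Vertices of G_*: 0..<nu.  Oriented edges of G_*: the finite set E :: 'e set.
   src e / tgt e: start/end vertex, einv e: the inverse edge (underline e),
   tau e :: 'd => int : the edge index in Z^d  (d = CARD('d)),
   alpha e : the periodic magnetic potential on e. *)

definition periodic_graph_data ::
  "nat \<Rightarrow> 'e set \<Rightarrow> ('e \<Rightarrow> nat) \<Rightarrow> ('e \<Rightarrow> nat) \<Rightarrow> ('e \<Rightarrow> 'e) \<Rightarrow> ('e \<Rightarrow> 'd \<Rightarrow> int) \<Rightarrow> bool" where
  "periodic_graph_data nu E src tgt einv tau \<longleftrightarrow>
     0 < nu \<and> finite E \<and>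
     (\<forall>e\<in>E. src e < nu \<and> tgt e < nu \<and> einv e \<in> E \<and> einv e \<noteq> e \<and> einv (einv e) = e \<and>
             src (einv e) = tgt e \<and> tgt (einv e) = src e \<and> tau (einv e) = (\<lambda>s. - tau e s))"

fun quot_walk :: "('e \<Rightarrow> nat) \<Rightarrow> ('e \<Rightarrow> nat) \<Rightarrow> 'e set \<Rightarrow> 'e list \<Rightarrow> nat \<Rightarrow> nat \<Rightarrow> bool" where
  "quot_walk src tgt E [] x y \<longleftrightarrow> x = y"
| "quot_walk src tgt E (e # es) x y \<longleftrightarrow> e \<in> E \<and> src e = x \<and> quot_walk src tgt E es (tgt e) y"

(* connectedness of the (infinite) periodic graph G: every vertex x_0 + 0 can be joined
   to every vertex y_0 + m, m in Z^d, i.e. there is a walk in G_* from x_0 to y_0 with total index m *)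
definition periodic_connected ::
  "nat \<Rightarrow> 'e set \<Rightarrow> ('e \<Rightarrow> nat) \<Rightarrow> ('e \<Rightarrow> nat) \<Rightarrow> ('e \<Rightarrow> 'd::finite \<Rightarrow> int) \<Rightarrow> bool" where
  "periodic_connected nu E src tgt tau \<longleftrightarrow>
     (\<forall>x<nu. \<forall>y<nu. \<forall>m::'d \<Rightarrow> int. \<exists>es. quot_walk src tgt E es x y \<and>
         (\<forall>s. (\<Sum>e\<leftarrow>es. tau e s) = m s))"

definition magnetic_potential :: "'e set \<Rightarrow> ('e \<Rightarrow> 'e) \<Rightarrow> ('e \<Rightarrow> real) \<Rightarrow> bool" where
  "magnetic_potential E einv alpha \<longleftrightarrow> (\<forall>e\<in>E. alpha (einv e) = - alpha e)"

definition vdeg :: "'e set \<Rightarrow> ('e \<Rightarrow> nat) \<Rightarrow> nat \<Rightarrow> nat" where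
  "vdeg E src x = card {e\<in>E. src e = x}"

definition kappa_plus :: "nat \<Rightarrow> 'e set \<Rightarrow> ('e \<Rightarrow> nat) \<Rightarrow> nat" where
  "kappa_plus nu E src = Max (vdeg E src ` {..<nu})"

definition diamV :: "nat \<Rightarrow> (nat \<Rightarrow> real) \<Rightarrow> real" where
  "diamV nu V = Max (V ` {..<nu}) - Min (V ` {..<nu})"

(* fiber operator H_alpha(k) = A_alpha(k) - varkappa + V on C^nu *)
definition fiber_op ::
  "nat \<Rightarrow> 'e set \<Rightarrow> ('e \<Rightarrow> nat) \<Rightarrow> ('e \<Rightarrow> nat) \<Rightarrow> ('e \<Rightarrow> 'd::finite \<Rightarrow> int) \<Rightarrow> ('e \<Rightarrow> real)
     \<Rightarrow> (nat \<Rightarrow> real) \<Rightarrow> ('d \<Rightarrow> real) \<Rightarrow> complex mat" where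
  "fiber_op nu E src tgt tau alpha V k = mat nu nu (\<lambda>(x,y).
      (\<Sum>e\<in>{e\<in>E. src e = x \<and> tgt e = y}. cis (alpha e + (\<Sum>s\<in>UNIV. of_int (tau e s) * k s)))
      + (if x = y then complex_of_real (V x - real (vdeg E src x)) else 0))"

definition eigs :: "complex mat \<Rightarrow> real list" where
  "eigs A = sort (map Re (SOME as. char_poly A = (\<Prod>a\<leftarrow>as. [:- a, 1:]) \<and> length as = dim_row A))"

definition mat_trace :: "complex mat \<Rightarrow> complex" where
  "mat_trace A = (\<Sum>i<dim_row A. A $$ (i, i))"

(* lambda_{alpha,j}(k), j = 0..nu-1 (0-indexed) *)
definition band_fun ::
  "nat \<Rightarrow> 'e set \<Rightarrow> ('e \<Rightarrow> nat) \<Rightarrow> ('e \<Rightarrow> nat) \<Rightarrow> ('e \<Rightarrow> 'd::finite \<Rightarrow> int) \<Rightarrow> ('e \<Rightarrow> real)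
     \<Rightarrow> (nat \<Rightarrow> real) \<Rightarrow> nat \<Rightarrow> ('d \<Rightarrow> real) \<Rightarrow> real" where
  "band_fun nu E src tgt tau alpha V j k = eigs (fiber_op nu E src tgt tau alpha V k) ! j"

definition total_bandwidth ::
  "nat \<Rightarrow> 'e set \<Rightarrow> ('e \<Rightarrow> nat) \<Rightarrow> ('e \<Rightarrow> nat) \<Rightarrow> ('e \<Rightarrow> 'd::finite \<Rightarrow> int) \<Rightarrow> ('e \<Rightarrow> real)
     \<Rightarrow> (nat \<Rightarrow> real) \<Rightarrow> nat \<Rightarrow> real" where
  "total_bandwidth nu E src tgt tau alpha V n =
     (\<Sum>j<nu. (SUP k. band_fun nu E src tgt tau alpha V j k ^ n)
             - (INF k. band_fun nu E src tgt tau alpha V j k ^ n))"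

end

theory Submission
  imports Defs "Jordan_Normal_Form.Schur_Decomposition"
begin

text \<open>
  The fiber operator H(k) is Hermitian, so its eigenvalues are real, and by Gershgorin's theorem
  each of them lies within kappa_x of V_x - kappa_x for some vertex x. Under the normalisation
  min V = kappa_+ this gives |lambda_j(k)| <= M := diam V + kappa_+, and the estimate
  |a^n - b^n| <= n M^(n-1) |a - b| on [-M, M] bounds the width of each band of H^n by
  n M^(n-1) times the width of the corresponding band of H. For the trace bound, a Schur
  triangularisation of H(k) gives Tr H(k)^n = sum_j lambda_j(k)^n, and
  |lambda_j(k1)^n - lambda_j(k2)^n| never exceeds the width of the j-th band of H^n.
\<close>

lemma mat_trace_mult_comm:
  assumes "A \<in> carrier_mat n n" and "B \<in> carrier_mat n n"
  shows "mat_trace (A * B) = mat_trace (B * A)"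
proof -
  have "mat_trace (A * B) = (\<Sum>i<n. \<Sum>k<n. A $$ (i, k) * B $$ (k, i))"
    using assms by (simp add: mat_trace_def scalar_prod_def atLeast0LessThan)
  also have "\<dots> = (\<Sum>k<n. \<Sum>i<n. B $$ (k, i) * A $$ (i, k))"
    by (subst sum.swap) (simp add: mult.commute)
  also have "\<dots> = mat_trace (B * A)"
    using assms by (simp add: mat_trace_def scalar_prod_def atLeast0LessThan)
  finally show ?thesis .
qed

lemma mat_trace_similar_mat_wit:
  assumes "similar_mat_wit A B P Q"
  shows "mat_trace A = mat_trace B"
proof -
  obtain n where car: "A \<in> carrier_mat n n" "B \<in> carrier_mat n n" "P \<in> carrier_mat n n"
      "Q \<in> carrier_mat n n" and QP: "Q * P = 1\<^sub>m n" and AB: "A = P * B * Q"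
    using assms unfolding similar_mat_wit_def Let_def by auto
  have "mat_trace A = mat_trace (Q * (P * B))"
    using AB car by (metis mat_trace_mult_comm mult_carrier_mat)
  also have "Q * (P * B) = B"
    using car QP by (simp flip: assoc_mult_mat[of Q n n P n B n])
  finally show ?thesis .
qed

lemma upper_triangular_mult:
  fixes A B :: "'a :: semiring_0 mat"
  assumes A: "A \<in> carrier_mat n n" and B: "B \<in> carrier_mat n n"
    and "upper_triangular A" and "upper_triangular B"
  shows "upper_triangular (A * B)"
proof
  fix i j assume "j < i" and "i < dim_row (A * B)"
  moreover have "A $$ (i, k) * B $$ (k, j) = 0" if "j < i" "i < n" "k < n" for k
    using that assms by (cases "k < i") (auto simp: upper_triangularD)
  ultimately show "(A * B) $$ (i, j) = 0"
    using A B by (simp add: scalar_prod_def)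
qed

lemma upper_triangular_mult_diag:
  fixes A B :: "'a :: semiring_0 mat"
  assumes A: "A \<in> carrier_mat n n" and B: "B \<in> carrier_mat n n"
    and "upper_triangular A" and "upper_triangular B" and i: "i < n"
  shows "(A * B) $$ (i, i) = A $$ (i, i) * B $$ (i, i)"
proof -
  have "A $$ (i, k) * B $$ (k, i) = 0" if "k < n" "k \<noteq> i" for k
    using that assms by (cases "k < i") (auto simp: upper_triangularD)
  then have "(\<Sum>k\<in>{0..<n}. A $$ (i, k) * B $$ (k, i)) = A $$ (i, i) * B $$ (i, i)"
    using i by (subst sum.remove[of _ i]) (auto intro: sum.neutral)
  then show ?thesis
    using A B i by (simp add: scalar_prod_def)
qed

lemma upper_triangular_pow:
  fixes A :: "'a :: semiring_1 mat"
  assumes A: "A \<in> carrier_mat n n" and "upper_triangular A"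
  shows "upper_triangular (A ^\<^sub>m k) \<and> (\<forall>i<n. (A ^\<^sub>m k) $$ (i, i) = A $$ (i, i) ^ k)"
proof (induction k)
  case 0
  show ?case using A by auto
next
  case (Suc k)
  have Ak: "A ^\<^sub>m k \<in> carrier_mat n n" using A by simp
  show ?case
    using Suc upper_triangular_mult[OF Ak A] upper_triangular_mult_diag[OF Ak A] assms(2)
    by (simp del: index_mult_mat add: power_commutes)
qed

lemma mat_trace_pow_char_poly:
  fixes A :: "complex mat"
  assumes A: "A \<in> carrier_mat n n" and cp: "char_poly A = (\<Prod>a\<leftarrow>es. [:- a, 1:])"
  shows "mat_trace (A ^\<^sub>m k) = (\<Sum>a\<leftarrow>es. a ^ k)"
proof -
  obtain B P Q where "schur_decomposition A es = (B, P, Q)"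
    by (cases "schur_decomposition A es") auto
  from schur_decomposition[OF A cp this]
  have sim: "similar_mat_wit A B P Q" and B: "upper_triangular B" and diag: "diag_mat B = es"
    by auto
  have Bc: "B \<in> carrier_mat n n"
    using sim A unfolding similar_mat_wit_def Let_def by auto
  have "mat_trace (A ^\<^sub>m k) = mat_trace (B ^\<^sub>m k)"
    using similar_mat_wit_pow[OF sim] by (intro mat_trace_similar_mat_wit) blast
  also have "\<dots> = (\<Sum>i<n. B $$ (i, i) ^ k)"
    using upper_triangular_pow[OF Bc B] Bc by (simp add: mat_trace_def)
  also have "\<dots> = (\<Sum>a\<leftarrow>diag_mat B. a ^ k)"
    using Bc by (simp add: diag_mat_def sum_list_sum_nth atLeast0LessThan)
  finally show ?thesis
    using diag by simp
qed

lemma eigenvector_nonzero_entry: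
  assumes "A \<in> carrier_mat n n" and "eigenvector A v a"
  obtains i where "i < n" and "v $ i \<noteq> 0"
proof -
  have "v \<in> carrier_vec n" and "v \<noteq> 0\<^sub>v n"
    using assms unfolding eigenvector_def by auto
  then show ?thesis
    using that by (metis eq_vecI carrier_vecD index_zero_vec)
qed

lemma eigenvector_row_sum:
  assumes "A \<in> carrier_mat n n" and "eigenvector A v a" and "i < n"
  shows "(\<Sum>j<n. A $$ (i, j) * v $ j) = a * v $ i"
proof -
  have v: "v \<in> carrier_vec n" and Av: "A *\<^sub>v v = a \<cdot>\<^sub>v v"
    using assms unfolding eigenvector_def by auto
  have "(A *\<^sub>v v) $ i = (\<Sum>j<n. A $$ (i, j) * v $ j)"
    using assms v by (simp add: scalar_prod_def atLeast0LessThan mult.commute)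
  moreover have "(A *\<^sub>v v) $ i = a * v $ i"
    unfolding Av using assms v by simp
  ultimately show ?thesis
    by simp
qed

text \<open>Gershgorin's theorem with arbitrary centres c x; the classical form takes c x = A(x, x).\<close>

lemma eigenvalue_gershgorin:
  fixes A :: "complex mat"
  assumes A: "A \<in> carrier_mat n n" and "eigenvalue A a"
  shows "\<exists>x<n. cmod (a - c x) \<le> (\<Sum>y<n. cmod (A $$ (x, y) - (if x = y then c x else 0)))"
proof -
  obtain v where ev: "eigenvector A v a"
    using assms unfolding eigenvalue_def by blast
  obtain i where "i < n" "v $ i \<noteq> 0"
    using eigenvector_nonzero_entry[OF A ev] .
  let ?m = "Max ((\<lambda>y. cmod (v $ y)) ` {..<n})"
  obtain x where x: "x < n" and "cmod (v $ x) = ?m"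
    using Max_in[of "(\<lambda>y. cmod (v $ y)) ` {..<n}"] \<open>i < n\<close> by fastforce
  then have max: "cmod (v $ y) \<le> cmod (v $ x)" if "y < n" for y
    using that by simp
  have vx: "cmod (v $ x) > 0"
    using max[OF \<open>i < n\<close>] \<open>v $ i \<noteq> 0\<close> by auto
  define R where "R y = A $$ (x, y) - (if x = y then c x else 0)" for y
  have "(a - c x) * v $ x = (\<Sum>y<n. R y * v $ y)"
  proof -
    have "a * v $ x = (\<Sum>y<n. A $$ (x, y) * v $ y)"
      using eigenvector_row_sum[OF A ev x] by simp
    moreover have "(\<Sum>y<n. (if x = y then c x else 0) * v $ y) = c x * v $ x"
      using x by (simp add: if_distrib[of "\<lambda>z. z * _"] cong: if_cong)
    ultimately show ?thesis
      unfolding R_def left_diff_distrib sum_subtractf by (simp add: mult.commute)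
  qed
  then have "cmod (a - c x) * cmod (v $ x) = cmod (\<Sum>y<n. R y * v $ y)"
    by (metis norm_mult)
  also have "\<dots> \<le> (\<Sum>y<n. cmod (R y) * cmod (v $ y))"
    by (rule order_trans[OF norm_sum]) (simp add: norm_mult)
  also have "\<dots> \<le> (\<Sum>y<n. cmod (R y)) * cmod (v $ x)"
    unfolding sum_distrib_right by (intro sum_mono mult_left_mono max) auto
  finally show ?thesis
    using x vx unfolding R_def by auto
qed

lemma hermitian_eigenvalue_real:
  fixes A :: "complex mat"
  assumes A: "A \<in> carrier_mat n n" and "eigenvalue A a"
    and herm: "\<And>i j. i < n \<Longrightarrow> j < n \<Longrightarrow> A $$ (j, i) = cnj (A $$ (i, j))"
  shows "Im a = 0"
proof -
  obtain v where ev: "eigenvector A v a"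
    using assms unfolding eigenvalue_def by blast
  obtain i0 where "i0 < n" "v $ i0 \<noteq> 0"
    using eigenvector_nonzero_entry[OF A ev] .
  define N where "N = (\<Sum>i<n. (cmod (v $ i))\<^sup>2)"
  have "N > 0"
    unfolding N_def using \<open>i0 < n\<close> \<open>v $ i0 \<noteq> 0\<close> by (intro sum_pos2[of _ i0]) auto
  define S where "S = (\<Sum>i<n. \<Sum>j<n. cnj (v $ i) * A $$ (i, j) * v $ j)"
  have "S = (\<Sum>i<n. cnj (v $ i) * (\<Sum>j<n. A $$ (i, j) * v $ j))"
    unfolding S_def by (simp add: sum_distrib_left mult.assoc)
  also have "\<dots> = (\<Sum>i<n. a * (cnj (v $ i) * v $ i))"
    by (intro sum.cong refl) (simp add: eigenvector_row_sum[OF A ev] mult.left_commute)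
  also have "\<dots> = a * N"
    unfolding N_def of_real_sum sum_distrib_left complex_norm_square
    by (simp add: mult.commute)
  finally have SN: "S = a * N" .
  have "cnj S = (\<Sum>i<n. \<Sum>j<n. cnj (v $ j) * A $$ (j, i) * v $ i)"
    unfolding S_def cnj_sum complex_cnj_mult complex_cnj_cnj
  proof (intro sum.cong refl)
    fix i j assume "i \<in> {..<n}" "j \<in> {..<n}"
    then have "cnj (A $$ (i, j)) = A $$ (j, i)"
      by (simp add: herm[of j i])
    then show "v $ i * cnj (A $$ (i, j)) * cnj (v $ j) = cnj (v $ j) * A $$ (j, i) * v $ i"
      by (simp add: mult_ac)
  qed
  also have "\<dots> = S"
    unfolding S_def by (rule sum.swap)
  finally have "cnj a * N = a * N"
    using SN by simp
  then have "cnj a = a"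
    using \<open>N > 0\<close> by simp
  then show ?thesis
    by (simp add: complex_eq_iff)
qed

lemma sum_list_map_sort:
  fixes f :: "'a :: linorder \<Rightarrow> 'b :: comm_monoid_add"
  shows "(\<Sum>x\<leftarrow>sort xs. f x) = (\<Sum>x\<leftarrow>xs. f x)"
proof -
  have "mset (map f (sort xs)) = mset (map f xs)"
    by simp
  then show ?thesis
    by (metis sum_mset_sum_list)
qed

lemma eigs_char_poly:
  assumes "A \<in> carrier_mat n n"
  obtains es where "char_poly A = (\<Prod>a\<leftarrow>es. [:- a, 1:])" and "length es = n"
    and "eigs A = sort (map Re es)"
proof -
  define es where "es = (SOME es. char_poly A = (\<Prod>a\<leftarrow>es. [:- a, 1:]) \<and> length es = dim_row A)"
  obtain as where "char_poly A = (\<Prod>a\<leftarrow>as. [:- a, 1:]) \<and> length as = dim_row A"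
    using char_poly_factorized[OF assms] assms by auto
  then have "char_poly A = (\<Prod>a\<leftarrow>es. [:- a, 1:]) \<and> length es = dim_row A"
    unfolding es_def by (rule someI)
  moreover have "eigs A = sort (map Re es)"
    by (simp only: eigs_def es_def)
  ultimately show ?thesis
    using that assms by auto
qed

lemma eigenvalue_if_char_poly_root:
  fixes A :: "'a :: field mat"
  assumes "A \<in> carrier_mat n n" and "char_poly A = (\<Prod>a\<leftarrow>es. [:- a, 1:])" and "a \<in> set es"
  shows "eigenvalue A a"
proof -
  have "poly (char_poly A) a = 0"
    unfolding assms(2) using assms(3) by (induction es) auto
  then show ?thesis
    using eigenvalue_root_char_poly[OF assms(1)] by simp
qed

lemma length_eigs:
  assumes "A \<in> carrier_mat n n"
  shows "length (eigs A) = n"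
  by (rule eigs_char_poly[OF assms]) simp

lemma eigs_in_Re_eigenvalues:
  assumes "A \<in> carrier_mat n n" and "x \<in> set (eigs A)"
  shows "\<exists>a. eigenvalue A a \<and> x = Re a"
proof -
  obtain es where cp: "char_poly A = (\<Prod>a\<leftarrow>es. [:- a, 1:])" and eigs: "eigs A = sort (map Re es)"
    using eigs_char_poly[OF assms(1)] by metis
  obtain a where "a \<in> set es" and "x = Re a"
    using assms(2) unfolding eigs by auto
  then show ?thesis
    using eigenvalue_if_char_poly_root[OF assms(1) cp] by blast
qed

lemma mat_trace_pow_eigs:
  fixes A :: "complex mat"
  assumes A: "A \<in> carrier_mat n n" and real: "\<And>a. eigenvalue A a \<Longrightarrow> Im a = 0"
  shows "mat_trace (A ^\<^sub>m k) = of_real (\<Sum>j<n. eigs A ! j ^ k)"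
proof -
  obtain es where cp: "char_poly A = (\<Prod>a\<leftarrow>es. [:- a, 1:])" and eigs: "eigs A = sort (map Re es)"
    using eigs_char_poly[OF A] by metis
  have "a ^ k = of_real (Re a ^ k)" if "a \<in> set es" for a
    using real[OF eigenvalue_if_char_poly_root[OF A cp that]]
    by (simp add: of_real_Re complex_is_Real_iff)
  then have "mat_trace (A ^\<^sub>m k) = (\<Sum>a\<leftarrow>es. of_real (Re a ^ k))"
    unfolding mat_trace_pow_char_poly[OF A cp] by (simp cong: map_cong)
  also have "\<dots> = of_real (\<Sum>a\<leftarrow>es. Re a ^ k)"
    by (induction es) auto
  also have "(\<Sum>a\<leftarrow>es. Re a ^ k) = (\<Sum>x\<leftarrow>eigs A. x ^ k)"
    unfolding eigs sum_list_map_sort by (simp add: o_def)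
  also have "\<dots> = (\<Sum>j<n. eigs A ! j ^ k)"
    by (simp add: sum_list_sum_nth length_eigs[OF A] atLeast0LessThan)
  finally show ?thesis .
qed

lemma abs_power_diff_le:
  fixes x y M :: real
  assumes x: "\<bar>x\<bar> \<le> M" and y: "\<bar>y\<bar> \<le> M"
  shows "\<bar>x ^ n - y ^ n\<bar> \<le> real n * M ^ (n - 1) * \<bar>x - y\<bar>"
proof (induction n)
  case 0
  then show ?case by simp
next
  case (Suc n)
  have M: "0 \<le> M"
    using x by linarith
  have "x ^ Suc n - y ^ Suc n = x * (x ^ n - y ^ n) + (x - y) * y ^ n"
    by (simp add: algebra_simps)
  then have "\<bar>x ^ Suc n - y ^ Suc n\<bar> \<le> \<bar>x\<bar> * \<bar>x ^ n - y ^ n\<bar> + \<bar>x - y\<bar> * \<bar>y\<bar> ^ n"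
    by (metis abs_mult abs_triangle_ineq power_abs)
  also have "\<dots> \<le> M * (real n * M ^ (n - 1) * \<bar>x - y\<bar>) + \<bar>x - y\<bar> * M ^ n"
    by (intro add_mono mult_mono Suc.IH x power_mono y mult_left_mono) (use M in auto)
  also have "\<dots> = real (Suc n) * M ^ (Suc n - 1) * \<bar>x - y\<bar>"
    by (cases n) (simp_all add: algebra_simps)
  finally show ?case .
qed

lemma bdd_range_power_if_abs_le:
  fixes f :: "'a \<Rightarrow> real"
  assumes "\<And>k. \<bar>f k\<bar> \<le> M"
  shows "bdd_above (range (\<lambda>k. f k ^ n))" and "bdd_below (range (\<lambda>k. f k ^ n))"
proof -
  have bound: "\<bar>f k ^ n\<bar> \<le> M ^ n" for k
    unfolding power_abs by (intro power_mono assms) simp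
  show "bdd_above (range (\<lambda>k. f k ^ n))"
    using bound by (intro bdd_aboveI2[where M = "M ^ n"]) (simp add: abs_le_iff)
  show "bdd_below (range (\<lambda>k. f k ^ n))"
    using bound by (intro bdd_belowI2[where m = "- (M ^ n)"]) (metis abs_le_D2 minus_le_iff)
qed

lemma abs_diff_le_SUP_minus_INF:
  fixes f :: "'a \<Rightarrow> real"
  assumes "bdd_above (range f)" and "bdd_below (range f)"
  shows "\<bar>f x - f y\<bar> \<le> (SUP k. f k) - (INF k. f k)"
  using cSUP_upper[OF UNIV_I assms(1), of x] cSUP_upper[OF UNIV_I assms(1), of y]
    cINF_lower[OF assms(2) UNIV_I, of x] cINF_lower[OF assms(2) UNIV_I, of y]
  by linarith

lemma SUP_minus_INF_power_le:
  fixes f :: "'a \<Rightarrow> real"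
  assumes bound: "\<And>k. \<bar>f k\<bar> \<le> M"
  shows "(SUP k. f k ^ n) - (INF k. f k ^ n) \<le> real n * M ^ (n - 1) * ((SUP k. f k) - (INF k. f k))"
proof -
  define C where "C = real n * M ^ (n - 1) * ((SUP k. f k) - (INF k. f k))"
  have "0 \<le> M"
    using bound[of undefined] by linarith
  have "f k1 ^ n \<le> f k2 ^ n + C" for k1 k2
  proof -
    have "\<bar>f k1 ^ n - f k2 ^ n\<bar> \<le> real n * M ^ (n - 1) * \<bar>f k1 - f k2\<bar>"
      by (rule abs_power_diff_le[OF bound bound])
    also have "\<dots> \<le> C"
      unfolding C_def using \<open>0 \<le> M\<close> bdd_range_power_if_abs_le[OF bound, where n=1]
      by (intro mult_left_mono abs_diff_le_SUP_minus_INF) auto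
    finally show ?thesis
      by linarith
  qed
  then have "(SUP k. f k ^ n) \<le> f k2 ^ n + C" for k2
    by (intro cSUP_least) auto
  then have "(SUP k. f k ^ n) - C \<le> (INF k. f k ^ n)"
    by (intro cINF_greatest) (auto simp: algebra_simps)
  then show ?thesis
    unfolding C_def by linarith
qed

definition magnetic_adjacency ::
  "'e set \<Rightarrow> ('e \<Rightarrow> nat) \<Rightarrow> ('e \<Rightarrow> nat) \<Rightarrow> ('e \<Rightarrow> 'd::finite \<Rightarrow> int) \<Rightarrow> ('e \<Rightarrow> real)
     \<Rightarrow> ('d \<Rightarrow> real) \<Rightarrow> nat \<Rightarrow> nat \<Rightarrow> complex" where
  "magnetic_adjacency E src tgt tau alpha k x y =
    (\<Sum>e\<in>{e\<in>E. src e = x \<and> tgt e = y}. cis (alpha e + (\<Sum>s\<in>UNIV. of_int (tau e s) * k s)))"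

lemma fiber_op_carrier: "fiber_op nu E src tgt tau alpha V k \<in> carrier_mat nu nu"
  by (simp add: fiber_op_def)

lemma index_fiber_op:
  assumes "x < nu" and "y < nu"
  shows "fiber_op nu E src tgt tau alpha V k $$ (x, y) = magnetic_adjacency E src tgt tau alpha k x y
    + (if x = y then complex_of_real (V x - real (vdeg E src x)) else 0)"
  using assms by (simp add: fiber_op_def magnetic_adjacency_def)

lemma cnj_magnetic_adjacency:
  assumes "periodic_graph_data nu E src tgt einv tau" and "magnetic_potential E einv alpha"
  shows "cnj (magnetic_adjacency E src tgt tau alpha k x y) = magnetic_adjacency E src tgt tau alpha k y x"
proof -
  let ?edges = "\<lambda>x y. {e\<in>E. src e = x \<and> tgt e = y}"
  let ?phase = "\<lambda>e. alpha e + (\<Sum>s\<in>UNIV. of_int (tau e s) * k s)"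
  have inv: "einv e \<in> E \<and> einv (einv e) = e \<and> src (einv e) = tgt e \<and> tgt (einv e) = src e
      \<and> ?phase (einv e) = - ?phase e" if "e \<in> E" for e
    using assms that unfolding periodic_graph_data_def magnetic_potential_def
    by (simp add: sum_negf)
  have bij: "bij_betw einv (?edges x y) (?edges y x)"
    by (rule bij_betw_byWitness[where f' = einv]) (auto dest: inv)
  have "cnj (magnetic_adjacency E src tgt tau alpha k x y) = (\<Sum>e\<in>?edges x y. cis (?phase (einv e)))"
    unfolding magnetic_adjacency_def cnj_sum by (intro sum.cong refl) (simp add: cis_cnj inv)
  also have "\<dots> = (\<Sum>e\<in>?edges y x. cis (?phase e))"
    by (rule sum.reindex_bij_betw[OF bij])
  finally show ?thesis
    unfolding magnetic_adjacency_def .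
qed

lemma fiber_op_hermitian:
  assumes "periodic_graph_data nu E src tgt einv tau" and "magnetic_potential E einv alpha"
    and "x < nu" and "y < nu"
  shows "fiber_op nu E src tgt tau alpha V k $$ (y, x) = cnj (fiber_op nu E src tgt tau alpha V k $$ (x, y))"
  using assms by (simp add: index_fiber_op cnj_magnetic_adjacency)

lemma magnetic_adjacency_row_norm_le:
  assumes "periodic_graph_data nu E src tgt einv tau"
  shows "(\<Sum>y<nu. cmod (magnetic_adjacency E src tgt tau alpha k x y)) \<le> real (vdeg E src x)"
proof -
  let ?edges = "\<lambda>y. {e\<in>E. src e = x \<and> tgt e = y}"
  have "finite E" and tgt: "\<And>e. e \<in> E \<Longrightarrow> tgt e < nu"
    using assms unfolding periodic_graph_data_def by auto
  have "(\<Sum>y<nu. cmod (magnetic_adjacency E src tgt tau alpha k x y)) \<le> (\<Sum>y<nu. real (card (?edges y)))"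
    unfolding magnetic_adjacency_def
    by (intro sum_mono order_trans[OF norm_sum]) simp
  also have "\<dots> = real (card (\<Union>y<nu. ?edges y))"
    using \<open>finite E\<close> by (subst card_UN_disjoint) auto
  also have "(\<Union>y<nu. ?edges y) = {e\<in>E. src e = x}"
    using tgt by auto
  finally show ?thesis
    by (simp add: vdeg_def)
qed

lemma fiber_op_eigenvalue_real:
  assumes "periodic_graph_data nu E src tgt einv tau" and "magnetic_potential E einv alpha"
    and "eigenvalue (fiber_op nu E src tgt tau alpha V k) a"
  shows "Im a = 0"
  using hermitian_eigenvalue_real[OF fiber_op_carrier assms(3)] fiber_op_hermitian[OF assms(1,2)]
  by blast

lemma fiber_op_eigenvalue_Re_bounds:
  assumes "periodic_graph_data nu E src tgt einv tau"
    and "eigenvalue (fiber_op nu E src tgt tau alpha V k) a"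
  shows "Min (V ` {..<nu}) - 2 * real (kappa_plus nu E src) \<le> Re a" and "Re a \<le> Max (V ` {..<nu})"
proof -
  let ?H = "fiber_op nu E src tgt tau alpha V k"
  let ?c = "\<lambda>x. complex_of_real (V x - real (vdeg E src x))"
  obtain x where x: "x < nu"
    and disc: "cmod (a - ?c x) \<le> (\<Sum>y<nu. cmod (?H $$ (x, y) - (if x = y then ?c x else 0)))"
    using eigenvalue_gershgorin[OF fiber_op_carrier assms(2), where c = ?c] by blast
  have "cmod (a - ?c x) \<le> (\<Sum>y<nu. cmod (magnetic_adjacency E src tgt tau alpha k x y))"
    using disc x by (simp add: index_fiber_op)
  also have "\<dots> \<le> real (vdeg E src x)"
    by (rule magnetic_adjacency_row_norm_le[OF assms(1)])
  finally have "\<bar>Re a - (V x - real (vdeg E src x))\<bar> \<le> real (vdeg E src x)"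
    using abs_Re_le_cmod[of "a - ?c x"] by simp
  moreover have "vdeg E src x \<le> kappa_plus nu E src"
    unfolding kappa_plus_def using x by (intro Max_ge) auto
  moreover have "Min (V ` {..<nu}) \<le> V x" and "V x \<le> Max (V ` {..<nu})"
    using x by (simp_all add: Min_le Max_ge)
  ultimately show "Min (V ` {..<nu}) - 2 * real (kappa_plus nu E src) \<le> Re a"
    and "Re a \<le> Max (V ` {..<nu})"
    by linarith+
qed

lemma band_fun_bounds:
  assumes "periodic_graph_data nu E src tgt einv tau" and j: "j < nu"
  shows "Min (V ` {..<nu}) - 2 * real (kappa_plus nu E src) \<le> band_fun nu E src tgt tau alpha V j k"
    and "band_fun nu E src tgt tau alpha V j k \<le> Max (V ` {..<nu})"
proof -
  let ?H = "fiber_op nu E src tgt tau alpha V k"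
  have "band_fun nu E src tgt tau alpha V j k \<in> set (eigs ?H)"
    unfolding band_fun_def by (intro nth_mem) (simp add: length_eigs[OF fiber_op_carrier] j)
  then obtain a where "eigenvalue ?H a" and "band_fun nu E src tgt tau alpha V j k = Re a"
    using eigs_in_Re_eigenvalues[OF fiber_op_carrier] by blast
  then show "Min (V ` {..<nu}) - 2 * real (kappa_plus nu E src) \<le> band_fun nu E src tgt tau alpha V j k"
    and "band_fun nu E src tgt tau alpha V j k \<le> Max (V ` {..<nu})"
    using fiber_op_eigenvalue_Re_bounds[OF assms(1)] by simp_all
qed

lemma abs_band_fun_le:
  assumes "periodic_graph_data nu E src tgt einv tau"
    and normalized: "Min (V ` {..<nu}) = real (kappa_plus nu E src)" and j: "j < nu"
  shows "\<bar>band_fun nu E src tgt tau alpha V j k\<bar> \<le> diamV nu V + real (kappa_plus nu E src)"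
proof -
  have "Min (V ` {..<nu}) \<le> V j" and "V j \<le> Max (V ` {..<nu})"
    using j by (simp_all add: Min_le Max_ge)
  then show ?thesis
    using band_fun_bounds[OF assms(1) j, where V = V and alpha = alpha and k = k] normalized
    unfolding diamV_def by linarith
qed

lemma mat_trace_fiber_op_pow:
  assumes "periodic_graph_data nu E src tgt einv tau" and "magnetic_potential E einv alpha"
  shows "mat_trace (fiber_op nu E src tgt tau alpha V k ^\<^sub>m n)
    = of_real (\<Sum>j<nu. band_fun nu E src tgt tau alpha V j k ^ n)"
  unfolding band_fun_def
  by (rule mat_trace_pow_eigs[OF fiber_op_carrier fiber_op_eigenvalue_real[OF assms]])

lemma total_bandwidth_pow_le:
  assumes "periodic_graph_data nu E src tgt einv tau"
    and "Min (V ` {..<nu}) = real (kappa_plus nu E src)"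
  shows "total_bandwidth nu E src tgt tau alpha V n
    \<le> real n * (diamV nu V + real (kappa_plus nu E src)) ^ (n - 1)
      * total_bandwidth nu E src tgt tau alpha V 1"
  unfolding total_bandwidth_def sum_distrib_left power_one_right
  using abs_band_fun_le[OF assms] by (intro sum_mono SUP_minus_INF_power_le) auto

lemma trace_pow_diff_le_total_bandwidth:
  assumes "periodic_graph_data nu E src tgt einv tau" and "magnetic_potential E einv alpha"
  shows "cmod (mat_trace (fiber_op nu E src tgt tau alpha V k1 ^\<^sub>m n)
      - mat_trace (fiber_op nu E src tgt tau alpha V k2 ^\<^sub>m n))
    \<le> total_bandwidth nu E src tgt tau alpha V n"
proof -
  let ?band = "band_fun nu E src tgt tau alpha V"
  let ?M = "\<bar>Min (V ` {..<nu}) - 2 * real (kappa_plus nu E src)\<bar> + \<bar>Max (V ` {..<nu})\<bar>"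
  have bound: "\<bar>?band j k\<bar> \<le> ?M" if "j < nu" for j k
    using band_fun_bounds[OF assms(1) that, where V = V and alpha = alpha and k = k] by linarith
  have "cmod (mat_trace (fiber_op nu E src tgt tau alpha V k1 ^\<^sub>m n)
      - mat_trace (fiber_op nu E src tgt tau alpha V k2 ^\<^sub>m n))
      = \<bar>\<Sum>j<nu. ?band j k1 ^ n - ?band j k2 ^ n\<bar>"
    unfolding mat_trace_fiber_op_pow[OF assms] sum_subtractf of_real_diff[symmetric]
    by (rule norm_of_real)
  also have "\<dots> \<le> (\<Sum>j<nu. \<bar>?band j k1 ^ n - ?band j k2 ^ n\<bar>)"
    by (rule sum_abs)
  also have "\<dots> \<le> total_bandwidth nu E src tgt tau alpha V n"
    unfolding total_bandwidth_def using bound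
    by (intro sum_mono abs_diff_le_SUP_minus_INF bdd_range_power_if_abs_le) auto
  finally show ?thesis .
qed

theorem lemma4p2:
  fixes nu :: nat and E :: "'e set" and src tgt :: "'e \<Rightarrow> nat" and einv :: "'e \<Rightarrow> 'e"
    and tau :: "'e \<Rightarrow> 'd::finite \<Rightarrow> int" and alpha :: "'e \<Rightarrow> real" and V :: "nat \<Rightarrow> real"
    and n :: nat
  assumes "periodic_graph_data nu E src tgt einv tau"
    and "periodic_connected nu E src tgt tau"
    and "magnetic_potential E einv alpha"
    and "Min (V ` {..<nu}) = real (kappa_plus nu E src)"
  shows "(total_bandwidth nu E src tgt tau alpha V n
           \<le> real n * (diamV nu V + real (kappa_plus nu E src)) ^ (n - 1)
               * total_bandwidth nu E src tgt tau alpha V 1)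
         \<and> (\<forall>k1 k2 :: 'd \<Rightarrow> real.
           cmod (mat_trace (fiber_op nu E src tgt tau alpha V k1 ^\<^sub>m n)
                 - mat_trace (fiber_op nu E src tgt tau alpha V k2 ^\<^sub>m n))
           \<le> total_bandwidth nu E src tgt tau alpha V n)"
  using total_bandwidth_pow_le[OF assms(1,4)] trace_pow_diff_le_total_bandwidth[OF assms(1,3)]
  by blast

end
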